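(* Mumbling $H_\mu$ with unique mumbling and basis $\mathit{LTL}$ is at least as expressive as stuttering $H_\mu$ with unique stuttering and basis $\mathit{LTL}$; and mumbling $H_\mu$ with unique mumbling and full basis is at least as expressive as stuttering $H_\mu$ with unique stuttering and full basis.
   Context: Fix a finite set $\mathit{AP}$. A trace is an infinite sequence $P_0m_0P_1m_1\dots$ with $P_i\subseteq\mathit{AP}$, $m_i\in\{\mathit{int},\mathit{call},\mathit{ret}\}$; $\mathit{tr}(i)=P_i$. Successor functions: $\mathit{succ}_\mathsf{g}(\mathit{tr},i)=i+1$; $\mathit{succ}_\mathsf{a}(\mathit{tr},i)=i+1$ if $m_i=\mathit{int}$, and if $m_i=\mathit{call}$ the least $j>i$ such that among $m_i,\dots,m_{j-1}$ the numbers of $\mathit{call}$ and $\mathit{ret}$ coincide (undefined if none), undefined if $m_i=\mathit{ret}$; $\mathit{succ}_\mathsf{c}(\mathit{tr},i)$ the largest $j<i$ with $m_j=\mathit{call}$ such that among $m_{j+1},\dots,m_{i-1}$ the numbers of $\mathit{call}$ and $\mathit{ret}$ coincide (undefined if none). Mumbling $H_\mu$: trace formulae $\delta ::= \mathit{ap}\mid Y\mid\delta\lor\delta\mid\lnot\delta\mid\bigcirc^\mathsf{f}\delta\mid\mu Y.\delta$ ($\mathsf{f}\in\{\mathsf{g},\mathsf{a},\mathsf{c}\}$); multitrace formulae $\psi ::= [\delta]_\pi\mid X\mid\psi\lor\psi\mid\lnot\psi\mid\bigcirc^\Delta\psi\mid\mu X.\psi$ with $\Delta$ mapping trace variables to trace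 formulae; hyperproperty formulae $\varphi ::= \exists\pi.\varphi\mid\forall\pi.\varphi\mid\psi$; fixpoint variables occur positively; closed = all variables bound. Trace semantics $\llbracket\delta\rrbracket^{\mathit{tr}}_{\mathcal{V}}\subseteq\mathbb{N}_0$: $\mathit{ap}\mapsto\{i\mid\mathit{ap}\in\mathit{tr}(i)\}$, $Y\mapsto\mathcal{V}(Y)$, union, complement, $\bigcirc^\mathsf{f}\delta\mapsto\{i\mid\mathit{succ}_\mathsf{f}(\mathit{tr},i)$ defined and in $\llbracket\delta\rrbracket\}$, $\mu Y.\delta\mapsto\bigcap\{I\mid\llbracket\delta\rrbracket_{\mathcal{V}[Y\mapsto I]}\subseteq I\}$. $\mathit{succ}_\delta(\mathit{tr},i)=\min\{j>i\mid j\in\llbracket\delta\rrbracket^{\mathit{tr}}\}$ if nonempty, else $i+1$; $\mathit{succ}_\Delta(\Pi,v)$ componentwise for a trace assignment $\Pi$ on $\pi_1,\dots,\pi_n$. $\llbracket\psi\rrbracket^\Pi_{\mathcal{W}}\subseteq\mathbb{N}_0^n$: $[\delta]_{\pi_j}\mapsto\{v\mid v_j\in\llbracket\delta\rrbracket^{\Pi(\pi_j)}\}$, $X\mapsto\mathcal{W}(X)$, Boolean as usual, $\bigcirc^\Delta\psi\mapsto\{v\mid\mathit{succ}_\Delta(\Pi,v)\in\llbracket\psi\rrbracket\}$, $\mu X$ least fixpoint. $\Pi\models_\mathcal{T}\exists\pi.\varphi$ iff some $\mathit{tr}\in\mathcal{T}$ gives $\Pi[\pi\mapsto\mathit{tr}]\models_\mathcal{T}\varphi$;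 $\forall$ for all; $\Pi\models_\mathcal{T}\psi$ iff $(0,\dots,0)\in\llbracket\psi\rrbracket^\Pi$. For closed $\varphi$ and a set of traces $\mathcal{T}$, $\mathcal{T}\models\varphi$ iff the empty assignment satisfies $\varphi$ over $\mathcal{T}$. Stuttering $H_\mu$ is identical except that multitrace next operators are $\bigcirc^\Gamma\psi$ with $\Gamma$ mapping each trace variable to a finite set of trace formulae; for a finite set $\gamma$, $\mathit{succ}_\gamma(\mathit{tr},i)=\min\{j>i\mid$ for some $\delta\in\gamma$: $i\in\llbracket\delta\rrbracket^{\mathit{tr}}\not\Leftrightarrow j\in\llbracket\delta\rrbracket^{\mathit{tr}}\}$ if nonempty, else $i+1$; $\mathit{succ}_\Gamma$ componentwise and $\llbracket\bigcirc^\Gamma\psi\rrbracket=\{v\mid\mathit{succ}_\Gamma(\Pi,v)\in\llbracket\psi\rrbracket\}$. Fragments: unique mumbling (resp. unique stuttering) means all multitrace next operators of the formula use the same $\Delta$ (resp. $\Gamma$). The base formulae of $\varphi$ are the trace formulae occurring in tests $[\delta]_\pi$ or as values $\Delta(\pi)$ (resp. as elements of sets $\Gamma(\pi)$); the formula has basis $\mathcal{B}$ if all its base formulae lie in $\mathcal{B}$; full basis means no restriction. Basis $\mathit{LTL}$ is the set of LTL formulae: trace formulae built from atomic propositions using $\lnot$, $\lor$, $\bigcirc^\mathsf{g}$ and $\delta_1\,\mathcal{U}\,\delta_2:=\mu Y.(\delta_2\lor(\delta_1\land\bigcirc^\mathsf{g}Y))$ as the only fixpoint construct. Logic $L_1$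 is at least as expressive as logic $L_2$ if for every closed hyperproperty formula $\varphi$ of $L_2$ there is a closed hyperproperty formula $\varphi'$ of $L_1$ such that for all sets of traces $\mathcal{T}$, $\mathcal{T}\models\varphi$ iff $\mathcal{T}\models\varphi'$. *)

theory Defs
  imports Main
begin

section \<open>Traces\<close>

datatype mode = MInt | MCall | MRet

text \<open>A trace P0 m0 P1 m1 ...: the pair of the proposition sequence and the move sequence.\<close>
type_synonym 'ap trace = "(nat \<Rightarrow> 'ap set) \<times> (nat \<Rightarrow> mode)"

definition props :: "'ap trace \<Rightarrow> nat \<Rightarrow> 'ap set" where
  "props tr = fst tr"

definition moves :: "'ap trace \<Rightarrow> nat \<Rightarrow> mode" where
  "moves tr = snd tr"

definition cnt :: "'ap trace \<Rightarrow> mode \<Rightarrow> nat \<Rightarrow> nat \<Rightarrow> nat" where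
  "cnt tr c i j = card {k. i \<le> k \<and> k < j \<and> moves tr k = c}"

definition balanced :: "'ap trace \<Rightarrow> nat \<Rightarrow> nat \<Rightarrow> bool" where
  "balanced tr i j \<longleftrightarrow> cnt tr MCall i j = cnt tr MRet i j"

datatype succ_kind = SG | SA | SC

fun succ_f :: "succ_kind \<Rightarrow> 'ap trace \<Rightarrow> nat \<Rightarrow> nat option" where
  "succ_f SG tr i = Some (Suc i)"
| "succ_f SA tr i =
     (case moves tr i of
        MInt \<Rightarrow> Some (Suc i)
      | MCall \<Rightarrow> (if \<exists>j>i. balanced tr i j then Some (LEAST j. j > i \<and> balanced tr i j) else None)
      | MRet \<Rightarrow> None)"
| "succ_f SC tr i =
     (if \<exists>j<i. moves tr j = MCall \<and> balanced tr (Suc j) i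
      then Some (GREATEST j. j < i \<and> moves tr j = MCall \<and> balanced tr (Suc j) i)
      else None)"

section \<open>Trace formulae\<close>

datatype 'ap tform =
    TAP 'ap
  | TVar nat
  | TOr "'ap tform" "'ap tform"
  | TNot "'ap tform"
  | TNext succ_kind "'ap tform"
  | TMu nat "'ap tform"

fun tsem :: "'ap trace \<Rightarrow> (nat \<Rightarrow> nat set) \<Rightarrow> 'ap tform \<Rightarrow> nat set" where
  "tsem tr V (TAP a) = {i. a \<in> props tr i}"
| "tsem tr V (TVar Y) = V Y"
| "tsem tr V (TOr d1 d2) = tsem tr V d1 \<union> tsem tr V d2"
| "tsem tr V (TNot d) = - tsem tr V d"
| "tsem tr V (TNext f d) = {i. \<exists>j. succ_f f tr i = Some j \<and> j \<in> tsem tr V d}"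
| "tsem tr V (TMu Y d) = \<Inter>{I. tsem tr (V(Y := I)) d \<subseteq> I}"

text \<open>semantics of a closed trace formula (valuation irrelevant)\<close>
definition tsem0 :: "'ap trace \<Rightarrow> 'ap tform \<Rightarrow> nat set" where
  "tsem0 tr d = tsem tr (\<lambda>_. {}) d"

fun tfree :: "'ap tform \<Rightarrow> nat set" where
  "tfree (TAP a) = {}"
| "tfree (TVar Y) = {Y}"
| "tfree (TOr d1 d2) = tfree d1 \<union> tfree d2"
| "tfree (TNot d) = tfree d"
| "tfree (TNext f d) = tfree d"
| "tfree (TMu Y d) = tfree d - {Y}"

text \<open>tpos Y p d: every free occurrence of Y in d is under an even (p = True)
  resp. odd (p = False) number of negations\<close>
fun tpos :: "nat \<Rightarrow> bool \<Rightarrow> 'ap tform \<Rightarrow> bool" where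
  "tpos Y p (TAP a) = True"
| "tpos Y p (TVar X) = (X = Y \<longrightarrow> p)"
| "tpos Y p (TOr d1 d2) = (tpos Y p d1 \<and> tpos Y p d2)"
| "tpos Y p (TNot d) = tpos Y (\<not> p) d"
| "tpos Y p (TNext f d) = tpos Y p d"
| "tpos Y p (TMu X d) = (X = Y \<or> tpos Y p d)"

fun twf :: "'ap tform \<Rightarrow> bool" where
  "twf (TAP a) = True"
| "twf (TVar X) = True"
| "twf (TOr d1 d2) = (twf d1 \<and> twf d2)"
| "twf (TNot d) = twf d"
| "twf (TNext f d) = twf d"
| "twf (TMu X d) = (tpos X True d \<and> twf d)"

definition tclosed_wf :: "'ap tform \<Rightarrow> bool" where
  "tclosed_wf d \<longleftrightarrow> tfree d = {} \<and> twf d"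

definition TAnd :: "'ap tform \<Rightarrow> 'ap tform \<Rightarrow> 'ap tform" where
  "TAnd d1 d2 = TNot (TOr (TNot d1) (TNot d2))"

text \<open>d1 U d2 := mu Y. (d2 or (d1 and next_g Y)); LTL formulas are closed, so any Y works\<close>
definition TUntil :: "nat \<Rightarrow> 'ap tform \<Rightarrow> 'ap tform \<Rightarrow> 'ap tform" where
  "TUntil Y d1 d2 = TMu Y (TOr d2 (TAnd d1 (TNext SG (TVar Y))))"

inductive is_ltl :: "'ap tform \<Rightarrow> bool" where
  "is_ltl (TAP a)"
| "is_ltl d \<Longrightarrow> is_ltl (TNot d)"
| "is_ltl d1 \<Longrightarrow> is_ltl d2 \<Longrightarrow> is_ltl (TOr d1 d2)"
| "is_ltl d \<Longrightarrow> is_ltl (TNext SG d)"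
| "is_ltl d1 \<Longrightarrow> is_ltl d2 \<Longrightarrow> is_ltl (TUntil Y d1 d2)"

section \<open>Multitrace and hyperproperty formulae\<close>

text \<open>Generic in the annotation 'd of the multitrace next operator:
  mumbling: 'd = nat \<Rightarrow> 'ap tform (Delta), stuttering: 'd = nat \<Rightarrow> 'ap tform set (Gamma).\<close>
datatype ('ap, 'd) mform =
    MTest "'ap tform" nat
  | MVar nat
  | MOr "('ap, 'd) mform" "('ap, 'd) mform"
  | MNot "('ap, 'd) mform"
  | MNext 'd "('ap, 'd) mform"
  | MMu nat "('ap, 'd) mform"

datatype ('ap, 'd) hform =
    HEx nat "('ap, 'd) hform"
  | HAll nat "('ap, 'd) hform"
  | HBody "('ap, 'd) mform"

type_synonym 'ap tassign = "nat \<Rightarrow> 'ap trace"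
type_synonym pos = "nat \<Rightarrow> nat"

fun msem :: "('d \<Rightarrow> 'ap tassign \<Rightarrow> pos \<Rightarrow> pos) \<Rightarrow> 'ap tassign \<Rightarrow> (nat \<Rightarrow> pos set)
             \<Rightarrow> ('ap, 'd) mform \<Rightarrow> pos set" where
  "msem nx P W (MTest d p) = {v. v p \<in> tsem0 (P p) d}"
| "msem nx P W (MVar X) = W X"
| "msem nx P W (MOr a b) = msem nx P W a \<union> msem nx P W b"
| "msem nx P W (MNot a) = - msem nx P W a"
| "msem nx P W (MNext D a) = {v. nx D P v \<in> msem nx P W a}"
| "msem nx P W (MMu X a) = \<Inter>{I. msem nx P (W(X := I)) a \<subseteq> I}"

fun hsat :: "('d \<Rightarrow> 'ap tassign \<Rightarrow> pos \<Rightarrow> pos) \<Rightarrow> 'ap trace set \<Rightarrow> 'ap tassign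
             \<Rightarrow> ('ap, 'd) hform \<Rightarrow> bool" where
  "hsat nx T P (HEx p f) = (\<exists>tr\<in>T. hsat nx T (P(p := tr)) f)"
| "hsat nx T P (HAll p f) = (\<forall>tr\<in>T. hsat nx T (P(p := tr)) f)"
| "hsat nx T P (HBody a) = ((\<lambda>_. 0) \<in> msem nx P (\<lambda>_. {}) a)"

text \<open>T |= phi for closed phi: evaluated under the empty assignment
  (for closed formulas the initial assignment is irrelevant)\<close>
definition hmodels :: "('d \<Rightarrow> 'ap tassign \<Rightarrow> pos \<Rightarrow> pos) \<Rightarrow> 'ap trace set \<Rightarrow> ('ap, 'd) hform \<Rightarrow> bool" where
  "hmodels nx T f = hsat nx T (\<lambda>_. undefined) f"

subsection \<open>Successor functions for the two kinds of next operators\<close>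

definition succ_delta :: "'ap trace \<Rightarrow> nat \<Rightarrow> 'ap tform \<Rightarrow> nat" where
  "succ_delta tr i d =
     (if {j. j > i \<and> j \<in> tsem0 tr d} \<noteq> {} then (LEAST j. j > i \<and> j \<in> tsem0 tr d) else Suc i)"

definition succ_gamma :: "'ap trace \<Rightarrow> nat \<Rightarrow> 'ap tform set \<Rightarrow> nat" where
  "succ_gamma tr i g =
     (let S = {j. j > i \<and> (\<exists>d\<in>g. (i \<in> tsem0 tr d) \<noteq> (j \<in> tsem0 tr d))}
      in if S \<noteq> {} then (LEAST j. j \<in> S) else Suc i)"

definition mumble_next :: "(nat \<Rightarrow> 'ap tform) \<Rightarrow> 'ap tassign \<Rightarrow> pos \<Rightarrow> pos" where
  "mumble_next D P v = (\<lambda>p. succ_delta (P p) (v p) (D p))"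

definition stutter_next :: "(nat \<Rightarrow> 'ap tform set) \<Rightarrow> 'ap tassign \<Rightarrow> pos \<Rightarrow> pos" where
  "stutter_next G P v = (\<lambda>p. succ_gamma (P p) (v p) (G p))"

fun mfree :: "('ap, 'd) mform \<Rightarrow> nat set" where
  "mfree (MTest d p) = {}"
| "mfree (MVar X) = {X}"
| "mfree (MOr a b) = mfree a \<union> mfree b"
| "mfree (MNot a) = mfree a"
| "mfree (MNext D a) = mfree a"
| "mfree (MMu X a) = mfree a - {X}"

fun mpos :: "nat \<Rightarrow> bool \<Rightarrow> ('ap, 'd) mform \<Rightarrow> bool" where
  "mpos X p (MTest d q) = True"
| "mpos X p (MVar Z) = (Z = X \<longrightarrow> p)"
| "mpos X p (MOr a b) = (mpos X p a \<and> mpos X p b)"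
| "mpos X p (MNot a) = mpos X (\<not> p) a"
| "mpos X p (MNext D a) = mpos X p a"
| "mpos X p (MMu Z a) = (Z = X \<or> mpos X p a)"

fun mwf :: "('ap, 'd) mform \<Rightarrow> bool" where
  "mwf (MTest d p) = True"
| "mwf (MVar X) = True"
| "mwf (MOr a b) = (mwf a \<and> mwf b)"
| "mwf (MNot a) = mwf a"
| "mwf (MNext D a) = mwf a"
| "mwf (MMu X a) = (mpos X True a \<and> mwf a)"

fun mtests :: "('ap, 'd) mform \<Rightarrow> 'ap tform set" where
  "mtests (MTest d p) = {d}"
| "mtests (MVar X) = {}"
| "mtests (MOr a b) = mtests a \<union> mtests b"
| "mtests (MNot a) = mtests a"
| "mtests (MNext D a) = mtests a"
| "mtests (MMu X a) = mtests a"

fun mtvars :: "('ap, 'd) mform \<Rightarrow> nat set" where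
  "mtvars (MTest d p) = {p}"
| "mtvars (MVar X) = {}"
| "mtvars (MOr a b) = mtvars a \<union> mtvars b"
| "mtvars (MNot a) = mtvars a"
| "mtvars (MNext D a) = mtvars a"
| "mtvars (MMu X a) = mtvars a"

fun mnexts :: "('ap, 'd) mform \<Rightarrow> 'd set" where
  "mnexts (MTest d p) = {}"
| "mnexts (MVar X) = {}"
| "mnexts (MOr a b) = mnexts a \<union> mnexts b"
| "mnexts (MNot a) = mnexts a"
| "mnexts (MNext D a) = insert D (mnexts a)"
| "mnexts (MMu X a) = mnexts a"

fun hbody :: "('ap, 'd) hform \<Rightarrow> ('ap, 'd) mform" where
  "hbody (HEx p f) = hbody f"
| "hbody (HAll p f) = hbody f"
| "hbody (HBody a) = a"

text \<open>quantified trace variables (the trace variables on which the annotations of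
  next operators are relevant)\<close>
fun hqvars :: "('ap, 'd) hform \<Rightarrow> nat set" where
  "hqvars (HEx p f) = insert p (hqvars f)"
| "hqvars (HAll p f) = insert p (hqvars f)"
| "hqvars (HBody a) = {}"

definition ann_mum :: "('ap, nat \<Rightarrow> 'ap tform) hform \<Rightarrow> 'ap tform set" where
  "ann_mum f = {D p | D p. D \<in> mnexts (hbody f) \<and> p \<in> hqvars f}"

definition ann_stut :: "('ap, nat \<Rightarrow> 'ap tform set) hform \<Rightarrow> 'ap tform set" where
  "ann_stut f = \<Union>{G p | G p. G \<in> mnexts (hbody f) \<and> p \<in> hqvars f}"

definition base_mum :: "('ap, nat \<Rightarrow> 'ap tform) hform \<Rightarrow> 'ap tform set" where
  "base_mum f = mtests (hbody f) \<union> ann_mum f"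

definition base_stut :: "('ap, nat \<Rightarrow> 'ap tform set) hform \<Rightarrow> 'ap tform set" where
  "base_stut f = mtests (hbody f) \<union> ann_stut f"

definition closed_mum :: "('ap, nat \<Rightarrow> 'ap tform) hform \<Rightarrow> bool" where
  "closed_mum f \<longleftrightarrow> mfree (hbody f) = {} \<and> mwf (hbody f) \<and> mtvars (hbody f) \<subseteq> hqvars f
     \<and> (\<forall>d\<in>base_mum f. tclosed_wf d)"

definition closed_stut :: "('ap, nat \<Rightarrow> 'ap tform set) hform \<Rightarrow> bool" where
  "closed_stut f \<longleftrightarrow> mfree (hbody f) = {} \<and> mwf (hbody f) \<and> mtvars (hbody f) \<subseteq> hqvars f
     \<and> (\<forall>G\<in>mnexts (hbody f). \<forall>p\<in>hqvars f. finite (G p))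
     \<and> (\<forall>d\<in>base_stut f. tclosed_wf d)"

definition unique_ann :: "('ap, nat \<Rightarrow> 'x) hform \<Rightarrow> bool" where
  "unique_ann f \<longleftrightarrow> (\<forall>D1\<in>mnexts (hbody f). \<forall>D2\<in>mnexts (hbody f). \<forall>p\<in>hqvars f. D1 p = D2 p)"

definition frag_mum :: "('ap tform \<Rightarrow> bool) \<Rightarrow> ('ap, nat \<Rightarrow> 'ap tform) hform \<Rightarrow> bool" where
  "frag_mum B f \<longleftrightarrow> closed_mum f \<and> unique_ann f \<and> (\<forall>d\<in>base_mum f. B d)"

definition frag_stut :: "('ap tform \<Rightarrow> bool) \<Rightarrow> ('ap, nat \<Rightarrow> 'ap tform set) hform \<Rightarrow> bool" where
  "frag_stut B f \<longleftrightarrow> closed_stut f \<and> unique_ann f \<and> (\<forall>d\<in>base_stut f. B d)"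

definition at_least_as_expressive ::
  "('f1 \<Rightarrow> bool) \<Rightarrow> ('t set \<Rightarrow> 'f1 \<Rightarrow> bool) \<Rightarrow> ('f2 \<Rightarrow> bool) \<Rightarrow> ('t set \<Rightarrow> 'f2 \<Rightarrow> bool) \<Rightarrow> bool" where
  "at_least_as_expressive L1 sat1 L2 sat2 \<longleftrightarrow>
     (\<forall>f. L2 f \<longrightarrow> (\<exists>f'. L1 f' \<and> (\<forall>T. sat2 T f \<longleftrightarrow> sat1 T f')))"

end

theory Submission
  imports Defs
begin

text \<open>
  A stuttering step on a trace with \<Gamma>(\<pi>) = G moves from i to k + 1, where k \<ge> i is the
  first change point of G, i.e. the first position at which some formula of G has different
  truth values at k and k + 1 (and to i + 1 if there is none). Change points are definable in
  LTL, and a mumbling step with respect to that formula moves from w to the first change point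
  after w. So a mumbling position w can stand for the stuttering position w + 1: next operators
  commute with this shift, and a test of \<delta> becomes a test of the next-formula of \<delta>.

  Only the start breaks the pattern, as position 0 need not follow a change point. The layer of
  the formula before its first next operator is therefore evaluated directly at position 0,
  unfolding every fixpoint once, and on the traces whose first stuttering step does not lead to
  position 1 the shift is followed by one more stuttering step, which LTL can express as well.
  Which traces these are is decided at position 0 by a case split over the quantified trace
  variables. Unique stuttering makes all next operators of the translation carry the same
  annotation; the annotation on unquantified trace variables is irrelevant.
\<close>

section \<open>Derived trace formulae\<close>

definition TTrue :: "'ap tform" where
  "TTrue = TOr (TAP undefined) (TNot (TAP undefined))"

definition TFalse :: "'ap tform" where
  "TFalse = TNot TTrue"

definition TXor :: "'ap tform \<Rightarrow> 'ap tform \<Rightarrow> 'ap tform" where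
  "TXor a b = TOr (TAnd a (TNot b)) (TAnd (TNot a) b)"

definition TDisj :: "'ap tform list \<Rightarrow> 'ap tform" where
  "TDisj ds = foldr TOr ds TFalse"

definition TEventually :: "'ap tform \<Rightarrow> 'ap tform" where
  "TEventually e = TUntil 0 TTrue e"

lemma tsem0_simps [simp]:
  "tsem0 tr (TAP x) = {i. x \<in> props tr i}"
  "tsem0 tr (TOr a b) = tsem0 tr a \<union> tsem0 tr b"
  "tsem0 tr (TNot a) = - tsem0 tr a"
  "tsem0 tr (TNext SG a) = {i. Suc i \<in> tsem0 tr a}"
  "tsem0 tr (TAnd a b) = tsem0 tr a \<inter> tsem0 tr b"
  "tsem0 tr TTrue = UNIV"
  "tsem0 tr TFalse = {}"
  "tsem0 tr (TXor a b) = (tsem0 tr a - tsem0 tr b) \<union> (tsem0 tr b - tsem0 tr a)"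
  by (auto simp: tsem0_def TAnd_def TTrue_def TFalse_def TXor_def)

lemma tsem0_TDisj [simp]: "tsem0 tr (TDisj ds) = (\<Union>d\<in>set ds. tsem0 tr d)"
  by (induction ds) (auto simp: TDisj_def)

lemma tsem_cong: "(\<And>Y. Y \<in> tfree d \<Longrightarrow> V Y = V' Y) \<Longrightarrow> tsem tr V d = tsem tr V' d"
proof (induction d arbitrary: V V')
  case (TOr d1 d2)
  have "tsem tr V d1 = tsem tr V' d1" "tsem tr V d2 = tsem tr V' d2"
    using TOr.prems by (intro TOr.IH; simp)+
  then show ?case by simp
next
  case (TNot d)
  have "tsem tr V d = tsem tr V' d" using TNot.prems by (intro TNot.IH) simp
  then show ?case by simp
next
  case (TNext f d)
  have "tsem tr V d = tsem tr V' d" using TNext.prems by (intro TNext.IH) simp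
  then show ?case by simp
next
  case (TMu Y d)
  have "tsem tr (V(Y := I)) d = tsem tr (V'(Y := I)) d" for I
    using TMu.prems by (intro TMu.IH) auto
  then show ?case by simp
qed simp_all

lemma tsem_closed: "tfree d = {} \<Longrightarrow> tsem tr V d = tsem0 tr d"
  unfolding tsem0_def by (rule tsem_cong) auto

lemma lfp_until:
  fixes A B :: "nat set"
  shows "lfp (\<lambda>I. B \<union> (A \<inter> {i. Suc i \<in> I})) = {i. \<exists>k\<ge>i. k \<in> B \<and> {i..<k} \<subseteq> A}"
    (is "lfp ?F = ?U")
proof (rule antisym)
  have "mono ?F" by (auto simp: mono_def)
  have "?F ?U \<subseteq> ?U"
  proof
    fix i assume "i \<in> ?F ?U"
    then consider "i \<in> B" | k where "Suc i \<le> k" "k \<in> B" "i \<in> A" "{Suc i..<k} \<subseteq> A"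
      by auto
    then show "i \<in> ?U"
    proof cases
      case (2 k)
      have "{i..<k} \<subseteq> insert i {Suc i..<k}" by auto
      with 2 have "{i..<k} \<subseteq> A" by blast
      moreover have "i \<le> k" using 2 by simp
      ultimately show ?thesis using 2 by blast
    qed auto
  qed
  then show "lfp ?F \<subseteq> ?U" by (rule lfp_lowerbound)
  show "?U \<subseteq> lfp ?F"
  proof
    fix i assume "i \<in> ?U"
    then obtain k where "i \<le> k" "k \<in> B" "{i..<k} \<subseteq> A" by blast
    have closed: "?F (lfp ?F) \<subseteq> lfp ?F" using lfp_fixpoint[OF \<open>mono ?F\<close>] by simp
    from \<open>i \<le> k\<close> \<open>{i..<k} \<subseteq> A\<close> show "i \<in> lfp ?F"
    proof (induction rule: inc_induct)
      case base
      with \<open>k \<in> B\<close> closed show ?case by blast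
    next
      case (step n)
      have "{Suc n..<k} \<subseteq> A" "n \<in> A" using step.prems step.hyps by auto
      with step.IH closed show ?case by blast
    qed
  qed
qed

lemma tsem0_TUntil:
  assumes "tfree a = {}" "tfree b = {}"
  shows "tsem0 tr (TUntil Y a b) = {i. \<exists>k\<ge>i. k \<in> tsem0 tr b \<and> {i..<k} \<subseteq> tsem0 tr a}"
proof -
  have "tsem tr ((\<lambda>_. {})(Y := I)) (TOr b (TAnd a (TNext SG (TVar Y)))) =
      tsem0 tr b \<union> (tsem0 tr a \<inter> {i. Suc i \<in> I})" for I
    using assms by (simp add: TAnd_def tsem_closed)
  then have "tsem0 tr (TUntil Y a b) = lfp (\<lambda>I. tsem0 tr b \<union> (tsem0 tr a \<inter> {i. Suc i \<in> I}))"
    by (simp only: tsem0_def TUntil_def tsem.simps(6) lfp_def)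
  then show ?thesis by (simp only: lfp_until)
qed

lemma tsem0_TEventually:
  "tfree e = {} \<Longrightarrow> tsem0 tr (TEventually e) = {i. \<exists>k\<ge>i. k \<in> tsem0 tr e}"
  unfolding TEventually_def by (subst tsem0_TUntil) (auto simp: TTrue_def)

definition ltl_closed :: "('ap tform \<Rightarrow> bool) \<Rightarrow> bool" where
  "ltl_closed B \<longleftrightarrow> (\<forall>a. B (TAP a)) \<and> (\<forall>d. B d \<longrightarrow> B (TNot d)) \<and> (\<forall>d e. B d \<longrightarrow> B e \<longrightarrow> B (TOr d e))
     \<and> (\<forall>d. B d \<longrightarrow> B (TNext SG d)) \<and> (\<forall>Y d e. B d \<longrightarrow> B e \<longrightarrow> B (TUntil Y d e))"

lemma ltl_closedI:
  assumes "\<And>a. B (TAP a)" "\<And>d. B d \<Longrightarrow> B (TNot d)" "\<And>d e. B d \<Longrightarrow> B e \<Longrightarrow> B (TOr d e)"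
    "\<And>d. B d \<Longrightarrow> B (TNext SG d)" "\<And>Y d e. B d \<Longrightarrow> B e \<Longrightarrow> B (TUntil Y d e)"
  shows "ltl_closed B"
  using assms by (simp add: ltl_closed_def)

lemma ltl_closedD:
  assumes "ltl_closed B"
  shows "B (TAP a)" "B d \<Longrightarrow> B (TNot d)" "B d \<Longrightarrow> B e \<Longrightarrow> B (TOr d e)"
    "B d \<Longrightarrow> B (TNext SG d)" "B d \<Longrightarrow> B e \<Longrightarrow> B (TUntil Y d e)"
  using assms by (simp_all add: ltl_closed_def)

lemma ltl_closed_derived:
  assumes "ltl_closed B"
  shows "B TTrue" "B TFalse" "B d \<Longrightarrow> B e \<Longrightarrow> B (TAnd d e)" "B d \<Longrightarrow> B e \<Longrightarrow> B (TXor d e)"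
    "\<forall>d\<in>set ds. B d \<Longrightarrow> B (TDisj ds)" "B e \<Longrightarrow> B (TEventually e)"
proof -
  note closed = ltl_closedD[OF assms]
  show "B TTrue" "B TFalse" by (simp_all add: TTrue_def TFalse_def closed)
  show and_closed: "B (TAnd d e)" if "B d" "B e" for d e
    using that by (simp add: TAnd_def closed)
  show "B (TXor d e)" if "B d" "B e"
    using that by (simp add: TXor_def closed and_closed)
  show "B (TDisj ds)" if "\<forall>d\<in>set ds. B d"
    using that \<open>B TFalse\<close> by (induction ds) (simp_all add: TDisj_def closed)
  show "B (TEventually e)" if "B e"
    using that \<open>B TTrue\<close> by (simp add: TEventually_def closed)
qed

lemma ltl_closed_is_ltl: "ltl_closed is_ltl"
  by (rule ltl_closedI) (auto intro: is_ltl.intros)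

lemma tpos_if_not_free: "Y \<notin> tfree d \<Longrightarrow> tpos Y p d"
  by (induction d arbitrary: p) auto

lemma ltl_closed_tclosed_wf: "ltl_closed tclosed_wf"
  by (rule ltl_closedI) (auto simp: tclosed_wf_def TUntil_def TAnd_def tpos_if_not_free)

lemma ltl_closed_conj: "ltl_closed B \<Longrightarrow> ltl_closed B' \<Longrightarrow> ltl_closed (\<lambda>d. B d \<and> B' d)"
  by (simp add: ltl_closed_def)

section \<open>Change points and stuttering successors\<close>

definition change_points :: "'ap trace \<Rightarrow> 'ap tform set \<Rightarrow> nat set" where
  "change_points tr G = {k. \<exists>d\<in>G. (k \<in> tsem0 tr d) \<noteq> (Suc k \<in> tsem0 tr d)}"

lemma same_truth_if_no_change_points:
  assumes "i \<le> j" "\<forall>m\<in>{i..<j}. m \<notin> change_points tr G" "d \<in> G"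
  shows "i \<in> tsem0 tr d \<longleftrightarrow> j \<in> tsem0 tr d"
  using assms(1,2)
proof (induction rule: dec_induct)
  case (step n)
  then have "(i \<in> tsem0 tr d) = (n \<in> tsem0 tr d)" "n \<notin> change_points tr G" by auto
  with assms(3) show ?case by (auto simp: change_points_def)
qed simp

lemma succ_gamma_first_change_point:
  assumes "i \<le> k" "k \<in> change_points tr G" "\<forall>m\<in>{i..<k}. m \<notin> change_points tr G"
  shows "succ_gamma tr i G = Suc k"
proof -
  define S where "S = {j. j > i \<and> (\<exists>d\<in>G. (i \<in> tsem0 tr d) \<noteq> (j \<in> tsem0 tr d))}"
  have "Suc k \<in> S"
    using assms same_truth_if_no_change_points[OF assms(1,3)]
    by (auto simp: S_def change_points_def)
  moreover have "Suc k \<le> j" if "j \<in> S" for j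
  proof (rule ccontr)
    assume "\<not> Suc k \<le> j"
    then have no_change: "\<forall>m\<in>{i..<j}. m \<notin> change_points tr G" using assms(3) by auto
    from \<open>j \<in> S\<close> obtain d where "i < j" "d \<in> G" "(i \<in> tsem0 tr d) \<noteq> (j \<in> tsem0 tr d)"
      by (auto simp: S_def)
    with no_change show False using same_truth_if_no_change_points[of i j tr G d] by simp
  qed
  ultimately have "(LEAST j. j \<in> S) = Suc k" by (intro Least_equality) auto
  moreover have "succ_gamma tr i G = (if S \<noteq> {} then (LEAST j. j \<in> S) else Suc i)"
    by (simp only: succ_gamma_def S_def Let_def)
  ultimately show ?thesis using \<open>Suc k \<in> S\<close> by auto
qed

lemma succ_gamma_no_change_point:
  assumes "\<forall>k\<ge>i. k \<notin> change_points tr G"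
  shows "succ_gamma tr i G = Suc i"
proof -
  have "i \<in> tsem0 tr d \<longleftrightarrow> j \<in> tsem0 tr d" if "i < j" "d \<in> G" for j d
    using assms that by (intro same_truth_if_no_change_points) auto
  then have "{j. j > i \<and> (\<exists>d\<in>G. (i \<in> tsem0 tr d) \<noteq> (j \<in> tsem0 tr d))} = {}" by blast
  then show ?thesis by (simp add: succ_gamma_def)
qed

lemma succ_gamma_cases:
  obtains (change) k where "i \<le> k" "k \<in> change_points tr G"
    "\<forall>m\<in>{i..<k}. m \<notin> change_points tr G" "succ_gamma tr i G = Suc k"
  | (no_change) "\<forall>k\<ge>i. k \<notin> change_points tr G" "succ_gamma tr i G = Suc i"
proof (cases "\<exists>k\<ge>i. k \<in> change_points tr G")
  case True
  then obtain k where "i \<le> k" "k \<in> change_points tr G" "\<forall>j<k. \<not> (i \<le> j \<and> j \<in> change_points tr G)"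
    using exists_least_iff[of "\<lambda>k. i \<le> k \<and> k \<in> change_points tr G"] by blast
  then have "\<forall>m\<in>{i..<k}. m \<notin> change_points tr G" by auto
  with \<open>i \<le> k\<close> \<open>k \<in> change_points tr G\<close> show ?thesis
    using change succ_gamma_first_change_point by blast
next
  case False
  then show ?thesis using no_change succ_gamma_no_change_point by blast
qed

lemma less_succ_gamma: "i < succ_gamma tr i G"
  by (cases tr i G rule: succ_gamma_cases) auto

lemma succ_gamma_Suc_eq:
  assumes "succ_gamma tr i G \<noteq> Suc i"
  shows "succ_gamma tr (Suc i) G = succ_gamma tr i G"
proof (cases tr i G rule: succ_gamma_cases)
  case (change k)
  with assms have "Suc i \<le> k" by auto
  with change show ?thesis by (auto intro: succ_gamma_first_change_point)
qed (use assms in simp)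

definition list_of :: "'a set \<Rightarrow> 'a list" where
  "list_of A = (SOME xs. set xs = A)"

lemma set_list_of: "finite A \<Longrightarrow> set (list_of A) = A"
  unfolding list_of_def by (rule someI_ex) (rule finite_list)

definition TChange :: "'ap tform set \<Rightarrow> 'ap tform" where
  "TChange G = TDisj (map (\<lambda>d. TXor d (TNext SG d)) (list_of G))"

lemma tsem0_TChange:
  assumes "finite G"
  shows "tsem0 tr (TChange G) = change_points tr G"
proof -
  have "tsem0 tr (TChange G) = (\<Union>d\<in>G. tsem0 tr (TXor d (TNext SG d)))"
    using assms by (simp add: TChange_def set_list_of)
  then show ?thesis unfolding change_points_def by auto
qed

lemma succ_delta_TChange:
  assumes "finite G"
  shows "Suc (succ_delta tr i (TChange G)) = succ_gamma tr (Suc i) G"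
proof -
  have succ_delta_eq: "succ_delta tr i (TChange G) =
    (if {j. i < j \<and> j \<in> change_points tr G} \<noteq> {}
     then LEAST j. i < j \<and> j \<in> change_points tr G else Suc i)"
    unfolding succ_delta_def tsem0_TChange[OF assms] ..
  show ?thesis
  proof (cases tr "Suc i" G rule: succ_gamma_cases)
    case (change k)
    have least: "(LEAST j. i < j \<and> j \<in> change_points tr G) = k"
    proof (rule Least_equality)
      show "i < k \<and> k \<in> change_points tr G" using change by simp
      show "k \<le> j" if "i < j \<and> j \<in> change_points tr G" for j
        using change(3) that by (meson atLeastLessThan_iff not_le Suc_leI)
    qed
    have "k \<in> {j. i < j \<and> j \<in> change_points tr G}" using change by simp
    then show ?thesis using least change(4) unfolding succ_delta_eq by auto
  next
    case no_change
    then have "{j. i < j \<and> j \<in> change_points tr G} = {}" by (auto simp: Suc_le_eq)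
    with no_change show ?thesis by (simp add: succ_delta_eq)
  qed
qed

lemma ltl_closed_TChange:
  assumes "ltl_closed B" "finite G" "\<forall>e\<in>G. B e"
  shows "B (TChange G)"
  using assms by (simp add: TChange_def set_list_of ltl_closed_derived ltl_closedD)

definition TStutNext :: "'ap tform set \<Rightarrow> 'ap tform \<Rightarrow> 'ap tform" where
  "TStutNext G d = TOr (TUntil 0 (TNot (TChange G)) (TAnd (TChange G) (TNext SG d)))
     (TAnd (TNot (TEventually (TChange G))) (TNext SG d))"

definition TStutSuc :: "'ap tform set \<Rightarrow> 'ap tform" where
  "TStutSuc G = TOr (TChange G) (TNot (TEventually (TChange G)))"

lemma ltl_closed_TStut:
  assumes "ltl_closed B" "finite G" "\<forall>e\<in>G. B e"
  shows "B d \<Longrightarrow> B (TStutNext G d)" "B (TStutSuc G)"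
  using ltl_closed_TChange[OF assms] ltl_closedD[OF assms(1)] ltl_closed_derived[OF assms(1)]
  by (simp_all add: TStutNext_def TStutSuc_def)

lemma tfree_TChange:
  assumes "finite G" "\<forall>e\<in>G. tclosed_wf e"
  shows "tfree (TChange G) = {}"
  using ltl_closed_TChange[OF ltl_closed_tclosed_wf assms] by (simp add: tclosed_wf_def)

lemma tsem0_TEventually_TChange:
  "finite G \<Longrightarrow> \<forall>e\<in>G. tclosed_wf e \<Longrightarrow>
    i \<in> tsem0 tr (TEventually (TChange G)) \<longleftrightarrow> (\<exists>k\<ge>i. k \<in> change_points tr G)"
  by (simp add: tsem0_TEventually tfree_TChange tsem0_TChange)

lemma tsem0_TStutSuc:
  assumes "finite G" "\<forall>e\<in>G. tclosed_wf e"
  shows "i \<in> tsem0 tr (TStutSuc G) \<longleftrightarrow> succ_gamma tr i G = Suc i"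
proof (cases tr i G rule: succ_gamma_cases)
  case (change k)
  then have "k = i \<longleftrightarrow> i \<in> change_points tr G"
    by (metis atLeastLessThan_iff le_eq_less_or_eq order_refl)
  with change assms show ?thesis
    by (auto simp: TStutSuc_def tsem0_TChange tsem0_TEventually_TChange)
next
  case no_change
  with assms show ?thesis by (auto simp: TStutSuc_def tsem0_TChange tsem0_TEventually_TChange)
qed

lemma tsem0_TStutNext:
  assumes "finite G" "\<forall>e\<in>G. tclosed_wf e" "tclosed_wf d"
  shows "i \<in> tsem0 tr (TStutNext G d) \<longleftrightarrow> succ_gamma tr i G \<in> tsem0 tr d"
proof -
  let ?C = "change_points tr G"
  have "tfree d = {}" using assms(3) by (simp add: tclosed_wf_def)
  then have until: "i \<in> tsem0 tr (TUntil 0 (TNot (TChange G)) (TAnd (TChange G) (TNext SG d))) \<longleftrightarrow>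
      (\<exists>k\<ge>i. k \<in> ?C \<and> Suc k \<in> tsem0 tr d \<and> (\<forall>m\<in>{i..<k}. m \<notin> ?C))"
    using assms by (subst tsem0_TUntil) (auto simp: TAnd_def tfree_TChange tsem0_TChange)
  show ?thesis
  proof (cases tr i G rule: succ_gamma_cases)
    case (change k)
    have "k' = k" if "i \<le> k'" "k' \<in> ?C" "\<forall>m\<in>{i..<k'}. m \<notin> ?C" for k'
      using change that by (metis atLeastLessThan_iff linorder_neqE_nat)
    with change have "i \<in> tsem0 tr (TUntil 0 (TNot (TChange G)) (TAnd (TChange G) (TNext SG d))) \<longleftrightarrow>
        Suc k \<in> tsem0 tr d"
      unfolding until by blast
    with change assms show ?thesis by (auto simp: TStutNext_def tsem0_TEventually_TChange)
  next
    case no_change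
    with assms show ?thesis by (auto simp: TStutNext_def until tsem0_TEventually_TChange)
  qed
qed

definition MFalse :: "('ap, 'd) mform" where
  "MFalse = MMu 0 (MVar 0)"

definition MAnd :: "('ap, 'd) mform \<Rightarrow> ('ap, 'd) mform \<Rightarrow> ('ap, 'd) mform" where
  "MAnd a b = MNot (MOr (MNot a) (MNot b))"

lemma msem_MFalse [simp]: "msem nx P W MFalse = {}"
  by (auto simp: MFalse_def)

lemma msem_MAnd [simp]: "msem nx P W (MAnd a b) = msem nx P W a \<inter> msem nx P W b"
  by (auto simp: MAnd_def)

lemma MFalse_simps [simp]:
  "mfree MFalse = {}" "mwf MFalse" "mtests MFalse = {}" "mnexts MFalse = {}" "mtvars MFalse = {}"
  by (auto simp: MFalse_def)

lemma MAnd_simps [simp]: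
  "mfree (MAnd a b) = mfree a \<union> mfree b" "mwf (MAnd a b) = (mwf a \<and> mwf b)"
  "mtests (MAnd a b) = mtests a \<union> mtests b" "mnexts (MAnd a b) = mnexts a \<union> mnexts b"
  "mtvars (MAnd a b) = mtvars a \<union> mtvars b"
  by (auto simp: MAnd_def)

lemma msem_MMu_lfp: "msem nx P W (MMu X \<phi>) = lfp (\<lambda>I. msem nx P (W(X := I)) \<phi>)"
  by (simp add: lfp_def)

lemma msem_cong: "(\<And>X. X \<in> mfree \<phi> \<Longrightarrow> W X = W' X) \<Longrightarrow> msem nx P W \<phi> = msem nx P W' \<phi>"
proof (induction \<phi> arbitrary: W W')
  case (MOr a b)
  have "msem nx P W a = msem nx P W' a" "msem nx P W b = msem nx P W' b"
    using MOr.prems by (intro MOr.IH; simp)+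
  then show ?case by simp
next
  case (MNot a)
  have "msem nx P W a = msem nx P W' a" using MNot.prems by (intro MNot.IH) simp
  then show ?case by simp
next
  case (MNext D a)
  have "msem nx P W a = msem nx P W' a" using MNext.prems by (intro MNext.IH) simp
  then show ?case by simp
next
  case (MMu X a)
  have "msem nx P (W(X := I)) a = msem nx P (W'(X := I)) a" for I
    using MMu.prems by (intro MMu.IH) auto
  then show ?case by simp
qed simp_all

lemma msem_update_MVar:
  assumes "\<forall>Y. mfree (\<sigma> Y) \<subseteq> {Y}" "\<forall>Y\<in>A - {X}. msem nx P W' (\<sigma> Y) = t -` W Y"
  shows "\<forall>Y\<in>A. msem nx P (W'(X := t -` J)) ((\<sigma>(X := MVar X)) Y) = t -` (W(X := J)) Y"
proof
  fix Y assume "Y \<in> A"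
  show "msem nx P (W'(X := t -` J)) ((\<sigma>(X := MVar X)) Y) = t -` (W(X := J)) Y"
  proof (cases "Y = X")
    case False
    then have "msem nx P (W'(X := t -` J)) (\<sigma> Y) = msem nx P W' (\<sigma> Y)"
      using assms(1) by (intro msem_cong) auto
    with False \<open>Y \<in> A\<close> assms(2) show ?thesis by simp
  qed simp
qed

lemma mpos_if_not_free: "X \<notin> mfree \<phi> \<Longrightarrow> mpos X p \<phi>"
  by (induction \<phi> arbitrary: p) auto

lemma msem_mono_polarity:
  assumes "I \<subseteq> J"
  shows "mpos X p \<phi> \<Longrightarrow>
    (if p then msem nx P (W(X := I)) \<phi> \<subseteq> msem nx P (W(X := J)) \<phi>
     else msem nx P (W(X := J)) \<phi> \<subseteq> msem nx P (W(X := I)) \<phi>)"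
proof (induction \<phi> arbitrary: p W)
  case (MOr a b)
  then show ?case using MOr.IH[of p W] by (cases p) auto
next
  case (MNot a)
  then show ?case using MNot.IH[of "\<not> p" W] by (cases p) auto
next
  case (MNext D a)
  have "if p then msem nx P (W(X := I)) a \<subseteq> msem nx P (W(X := J)) a
    else msem nx P (W(X := J)) a \<subseteq> msem nx P (W(X := I)) a"
    using MNext by simp
  then show ?case by (cases p) auto
next
  case (MMu Z a)
  show ?case
  proof (cases "Z = X")
    case False
    have "if p then msem nx P (W(X := I, Z := K)) a \<subseteq> msem nx P (W(X := J, Z := K)) a
      else msem nx P (W(X := J, Z := K)) a \<subseteq> msem nx P (W(X := I, Z := K)) a" for K
      using MMu.IH[of p "W(Z := K)"] MMu.prems False by (simp add: fun_upd_twist[of X Z])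
    then show ?thesis unfolding msem_MMu_lfp by (cases p) (auto intro!: lfp_mono)
  qed (simp del: fun_upd_apply)
qed (use assms in auto)

lemma msem_mono:
  assumes "mpos X True \<phi>"
  shows "mono (\<lambda>I. msem nx P (W(X := I)) \<phi>)"
proof (rule monoI)
  fix I J :: "pos set"
  assume "I \<subseteq> J"
  from msem_mono_polarity[OF this assms] show "msem nx P (W(X := I)) \<phi> \<subseteq> msem nx P (W(X := J)) \<phi>"
    by simp
qed

lemma lfp_vimage:
  assumes "mono F" "mono G" "\<And>J. G (t -` J) = t -` F J"
  shows "lfp G = t -` lfp F"
proof (rule antisym)
  have "G (t -` lfp F) = t -` lfp F" using assms(3) lfp_fixpoint[OF assms(1)] by simp
  then show "lfp G \<subseteq> t -` lfp F" by (intro lfp_lowerbound) simp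
  show "t -` lfp F \<subseteq> lfp G"
  proof (induction rule: lfp_ordinal_induct[where f = F])
    case mono
    show ?case by (rule assms(1))
  next
    case (step S)
    then have "G (t -` S) \<subseteq> G (lfp G)" using assms(2) by (simp add: monoD)
    then show ?case using assms(3) lfp_fixpoint[OF assms(2)] by simp
  qed auto
qed

lemma mem_lfp_iff_mem_minus:
  assumes "mono F"
  shows "z \<in> lfp F \<longleftrightarrow> z \<in> F (lfp F - {z})"
proof
  have "F (lfp F - {z}) \<subseteq> lfp F"
    using monoD[OF assms, of "lfp F - {z}" "lfp F"] lfp_fixpoint[OF assms] by blast
  then show "z \<in> lfp F" if "z \<in> F (lfp F - {z})" using that by blast
  show "z \<in> F (lfp F - {z})" if "z \<in> lfp F"
  proof (rule ccontr)
    assume "z \<notin> F (lfp F - {z})"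
    with \<open>F (lfp F - {z}) \<subseteq> lfp F\<close> have "lfp F \<subseteq> lfp F - {z}" by (intro lfp_lowerbound) blast
    with that show False by blast
  qed
qed

definition agree_on :: "nat set \<Rightarrow> pos \<Rightarrow> pos \<Rightarrow> bool" where
  "agree_on Q v v' \<longleftrightarrow> (\<forall>p\<in>Q. v p = v' p)"

lemma agree_on_refl: "agree_on Q v v"
  by (simp add: agree_on_def)

lemma agree_on_sym: "agree_on Q v v' \<Longrightarrow> agree_on Q v' v"
  by (simp add: agree_on_def)

definition determined_by :: "nat set \<Rightarrow> pos set \<Rightarrow> bool" where
  "determined_by Q A \<longleftrightarrow> (\<forall>v v'. agree_on Q v v' \<longrightarrow> v \<in> A \<longrightarrow> v' \<in> A)"

lemma determined_by_lfp:
  assumes "mono F" "\<And>I. determined_by Q I \<Longrightarrow> determined_by Q (F I)"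
  shows "determined_by Q (lfp F)"
proof (induction rule: lfp_ordinal_induct[where f = F])
  case mono
  show ?case by (rule assms(1))
next
  case (step S)
  then show ?case using assms(2) by blast
next
  case (union M)
  then show ?case unfolding determined_by_def by blast
qed

lemma determined_by_Compl: "determined_by Q A \<Longrightarrow> determined_by Q (- A)"
  unfolding determined_by_def agree_on_def by (metis ComplD ComplI)

lemma lfp_eq_if_eq_on_determined:
  assumes "mono F1" "mono F2" "\<And>I. determined_by Q I \<Longrightarrow> F1 I = F2 I \<and> determined_by Q (F1 I)"
  shows "lfp F1 = lfp F2 \<and> determined_by Q (lfp F1)"
proof -
  have det1: "determined_by Q (lfp F1)" using determined_by_lfp[OF assms(1)] assms(3) by blast
  have det2: "determined_by Q (lfp F2)" using determined_by_lfp[OF assms(2)] assms(3) by metis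
  have "lfp F2 \<le> lfp F1"
    by (rule lfp_lowerbound) (metis assms(3) det1 lfp_fixpoint[OF assms(1)] order_refl)
  moreover have "lfp F1 \<le> lfp F2"
    by (rule lfp_lowerbound) (metis assms(3) det2 lfp_fixpoint[OF assms(2)] order_refl)
  ultimately show ?thesis using det1 by simp
qed

lemma stutter_next_vimage_determined:
  assumes "\<forall>p\<in>Q. G p = g p" "determined_by Q A"
  shows "{v. stutter_next G P v \<in> A} = {v. stutter_next g P v \<in> A}"
    "determined_by Q {v. stutter_next g P v \<in> A}"
proof -
  have agree: "agree_on Q (stutter_next G' P v) (stutter_next g P v')"
    if "\<forall>p\<in>Q. G' p = g p" "agree_on Q v v'" for G' v v'
    using that by (simp add: agree_on_def stutter_next_def)
  have "agree_on Q (stutter_next G P v) (stutter_next g P v)" for v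
    using assms(1) agree_on_refl by (rule agree)
  with assms(2) agree_on_sym show "{v. stutter_next G P v \<in> A} = {v. stutter_next g P v \<in> A}"
    unfolding determined_by_def by blast
  show "determined_by Q {v. stutter_next g P v \<in> A}"
    using assms(2) agree[of g] unfolding determined_by_def by blast
qed

lemma msem_stutter_next_uniform:
  assumes "mtvars \<phi> \<subseteq> Q" "mwf \<phi>" "\<forall>G\<in>mnexts \<phi>. \<forall>p\<in>Q. G p = g p" "\<forall>X. determined_by Q (W X)"
  shows "msem stutter_next P W \<phi> = msem (\<lambda>_. stutter_next g) P W \<phi>
    \<and> determined_by Q (msem stutter_next P W \<phi>)"
  using assms
proof (induction \<phi> arbitrary: W)
  case (MTest d p)
  then show ?case by (auto simp: determined_by_def agree_on_def)
next
  case (MOr a b)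
  then show ?case using MOr.IH by (auto simp: determined_by_def)
next
  case (MNot a)
  then show ?case using MNot.IH by (simp add: determined_by_Compl)
next
  case (MNext G a)
  have "msem stutter_next P W a = msem (\<lambda>_. stutter_next g) P W a
      \<and> determined_by Q (msem stutter_next P W a)"
    using MNext.prems by (intro MNext.IH) auto
  then have IH: "msem stutter_next P W a = msem (\<lambda>_. stutter_next g) P W a"
    "determined_by Q (msem stutter_next P W a)" by blast+
  have "\<forall>p\<in>Q. G p = g p" using MNext.prems(3) by simp
  from stutter_next_vimage_determined[OF this IH(2)] IH(1) show ?case by simp
next
  case (MMu X a)
  let ?F1 = "\<lambda>I. msem stutter_next P (W(X := I)) a"
  let ?F2 = "\<lambda>I. msem (\<lambda>_. stutter_next g) P (W(X := I)) a"
  have "mpos X True a" using MMu.prems by simp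
  then have "mono ?F1" "mono ?F2" by (simp_all add: msem_mono)
  moreover have "?F1 I = ?F2 I \<and> determined_by Q (?F1 I)" if "determined_by Q I" for I
    using MMu.prems that by (intro MMu.IH) auto
  ultimately have "lfp ?F1 = lfp ?F2 \<and> determined_by Q (lfp ?F1)"
    by (rule lfp_eq_if_eq_on_determined)
  then show ?case unfolding msem_MMu_lfp .
qed simp

section \<open>The translation\<close>

definition wf_ann :: "(nat \<Rightarrow> 'ap tform set) \<Rightarrow> bool" where
  "wf_ann g \<longleftrightarrow> (\<forall>p. finite (g p) \<and> (\<forall>d\<in>g p. tclosed_wf d))"

text \<open>The mumbling position w represents the stuttering position shift_pos S g P w, where S
  contains the traces whose first stuttering step leads to position 1.\<close>

definition shift_pos :: "nat set \<Rightarrow> (nat \<Rightarrow> 'ap tform set) \<Rightarrow> 'ap tassign \<Rightarrow> pos \<Rightarrow> pos" where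
  "shift_pos S g P w = (\<lambda>p. if p \<in> S then Suc (w p) else succ_gamma (P p) (Suc (w p)) (g p))"

lemma shift_pos_ne_start: "shift_pos S g P w \<noteq> (\<lambda>_. 0)"
proof
  assume "shift_pos S g P w = (\<lambda>_. 0)"
  then have "shift_pos S g P w 0 = 0" by simp
  with less_succ_gamma[of "Suc (w 0)" "P 0" "g 0"] show False
    by (simp add: shift_pos_def split: if_splits)
qed

lemma shift_pos_mumble_next:
  assumes "wf_ann g"
  shows "shift_pos S g P (mumble_next (\<lambda>p. TChange (g p)) P w) =
    stutter_next g P (shift_pos S g P w)"
  using assms
  by (auto simp: shift_pos_def mumble_next_def stutter_next_def wf_ann_def succ_delta_TChange)

fun shift_tr :: "nat set \<Rightarrow> (nat \<Rightarrow> 'ap tform set) \<Rightarrow> (nat \<Rightarrow> ('ap, nat \<Rightarrow> 'ap tform) mform)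
    \<Rightarrow> ('ap, 'd) mform \<Rightarrow> ('ap, nat \<Rightarrow> 'ap tform) mform" where
  "shift_tr S g \<sigma> (MTest d p) = MTest (TNext SG (if p \<in> S then d else TStutNext (g p) d)) p"
| "shift_tr S g \<sigma> (MVar X) = \<sigma> X"
| "shift_tr S g \<sigma> (MOr a b) = MOr (shift_tr S g \<sigma> a) (shift_tr S g \<sigma> b)"
| "shift_tr S g \<sigma> (MNot a) = MNot (shift_tr S g \<sigma> a)"
| "shift_tr S g \<sigma> (MNext D a) = MNext (\<lambda>p. TChange (g p)) (shift_tr S g \<sigma> a)"
| "shift_tr S g \<sigma> (MMu X a) = MMu X (shift_tr S g (\<sigma>(X := MVar X)) a)"

text \<open>A fixpoint variable reached at position 0 without passing a next operator contributes
  nothing (mem_lfp_iff_mem_minus), hence becomes MFalse.\<close>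

fun init_tr :: "nat set \<Rightarrow> (nat \<Rightarrow> 'ap tform set) \<Rightarrow> (nat \<Rightarrow> ('ap, nat \<Rightarrow> 'ap tform) mform)
    \<Rightarrow> ('ap, 'd) mform \<Rightarrow> ('ap, nat \<Rightarrow> 'ap tform) mform" where
  "init_tr S g \<rho> (MTest d p) = MTest d p"
| "init_tr S g \<rho> (MVar X) = MFalse"
| "init_tr S g \<rho> (MOr a b) = MOr (init_tr S g \<rho> a) (init_tr S g \<rho> b)"
| "init_tr S g \<rho> (MNot a) = MNot (init_tr S g \<rho> a)"
| "init_tr S g \<rho> (MNext D a) = shift_tr S g \<rho> a"
| "init_tr S g \<rho> (MMu X a) = init_tr S g (\<rho>(X := shift_tr S g \<rho> (MMu X a))) a"

fun split_tr :: "(nat \<Rightarrow> 'ap tform set) \<Rightarrow> ('ap, 'd) mform \<Rightarrow> nat list \<Rightarrow> nat set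
    \<Rightarrow> ('ap, nat \<Rightarrow> 'ap tform) mform" where
  "split_tr g \<phi> [] S = init_tr S g (\<lambda>_. MFalse) \<phi>"
| "split_tr g \<phi> (p # ps) S =
     MOr (MAnd (MTest (TStutSuc (g p)) p) (split_tr g \<phi> ps (insert p S)))
         (MAnd (MNot (MTest (TStutSuc (g p)) p)) (split_tr g \<phi> ps S))"

lemma shift_tr_mfree: "mfree (shift_tr S g \<sigma> \<phi>) \<subseteq> (\<Union>Y\<in>mfree \<phi>. mfree (\<sigma> Y))"
proof (induction \<phi> arbitrary: \<sigma>)
  case (MMu X a)
  have "mfree (shift_tr S g (\<sigma>(X := MVar X)) a) \<subseteq> (\<Union>Y\<in>mfree a. mfree ((\<sigma>(X := MVar X)) Y))"
    by (rule MMu.IH)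
  then show ?case by (force split: if_splits)
qed fastforce+

lemma shift_tr_mpos:
  assumes "\<forall>Y. mfree (\<sigma> Y) \<subseteq> {Y}" "\<sigma> X = MVar X" "mpos X p \<phi>"
  shows "mpos X p (shift_tr S g \<sigma> \<phi>)"
  using assms
proof (induction \<phi> arbitrary: \<sigma> p)
  case (MVar Y)
  then show ?case by (cases "Y = X") (auto intro: mpos_if_not_free)
next
  case (MMu Z a)
  then show ?case by (cases "Z = X") auto
qed auto

lemma msem_shift_tr:
  assumes "wf_ann g" "\<forall>d\<in>mtests \<phi>. tclosed_wf d" "mwf \<phi>" "\<forall>Y. mfree (\<sigma> Y) \<subseteq> {Y}"
    "\<forall>Y\<in>mfree \<phi>. msem mumble_next P W' (\<sigma> Y) = shift_pos S g P -` W Y"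
  shows "msem mumble_next P W' (shift_tr S g \<sigma> \<phi>) =
    shift_pos S g P -` msem (\<lambda>_. stutter_next g) P W \<phi>"
  using assms(2-)
proof (induction \<phi> arbitrary: \<sigma> W W')
  case (MTest d p)
  have "finite (g p)" "\<forall>e\<in>g p. tclosed_wf e" using assms(1) by (auto simp: wf_ann_def)
  with MTest show ?case by (auto simp: shift_pos_def tsem0_TStutNext)
next
  case (MOr a b)
  have "msem mumble_next P W' (shift_tr S g \<sigma> a) = shift_pos S g P -` msem (\<lambda>_. stutter_next g) P W a"
    "msem mumble_next P W' (shift_tr S g \<sigma> b) = shift_pos S g P -` msem (\<lambda>_. stutter_next g) P W b"
    using MOr.prems by (intro MOr.IH; auto)+
  then show ?case by simp
next
  case (MNot a)
  have "msem mumble_next P W' (shift_tr S g \<sigma> a) = shift_pos S g P -` msem (\<lambda>_. stutter_next g) P W a"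
    using MNot.prems by (intro MNot.IH) auto
  then show ?case by (simp add: vimage_Compl)
next
  case (MNext D a)
  have "msem mumble_next P W' (shift_tr S g \<sigma> a) = shift_pos S g P -` msem (\<lambda>_. stutter_next g) P W a"
    using MNext.prems by (intro MNext.IH) auto
  then show ?case by (simp add: shift_pos_mumble_next[OF assms(1)])
next
  case (MMu X a)
  let ?t = "shift_pos S g P"
  define \<sigma>' where "\<sigma>' = \<sigma>(X := MVar X)"
  define G where "G I = msem mumble_next P (W'(X := I)) (shift_tr S g \<sigma>' a)" for I
  define F where "F J = msem (\<lambda>_. stutter_next g) P (W(X := J)) a" for J
  have free: "\<forall>Y. mfree (\<sigma>' Y) \<subseteq> {Y}" using MMu.prems(3) by (simp add: \<sigma>'_def)
  have "mpos X True a" using MMu.prems(2) by simp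
  moreover have "mpos X True (shift_tr S g \<sigma>' a)"
    by (rule shift_tr_mpos[OF free _ \<open>mpos X True a\<close>]) (simp add: \<sigma>'_def)
  ultimately have "mono F" "mono G" unfolding F_def G_def by (simp_all add: msem_mono)
  moreover have "G (?t -` J) = ?t -` F J" for J
    unfolding G_def F_def \<sigma>'_def using MMu.prems free
    by (intro MMu.IH msem_update_MVar) (auto simp: \<sigma>'_def)
  ultimately have "lfp G = ?t -` lfp F" by (rule lfp_vimage)
  then show ?case unfolding shift_tr.simps msem_MMu_lfp G_def F_def \<sigma>'_def .
qed auto

lemma shift_pos_start:
  assumes "\<And>p. p \<in> S \<longleftrightarrow> succ_gamma (P p) 0 (g p) = 1"
  shows "shift_pos S g P (\<lambda>_. 0) = stutter_next g P (\<lambda>_. 0)"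
proof
  fix p
  show "shift_pos S g P (\<lambda>_. 0) p = stutter_next g P (\<lambda>_. 0) p"
    using assms[of p] succ_gamma_Suc_eq[of "P p" 0 "g p"]
    by (auto simp: shift_pos_def stutter_next_def)
qed

lemma msem_init_tr:
  assumes "wf_ann g" "shift_pos S g P (\<lambda>_. 0) = stutter_next g P (\<lambda>_. 0)"
    "\<forall>d\<in>mtests \<phi>. tclosed_wf d" "mwf \<phi>" "\<forall>Y. mfree (\<rho> Y) = {}"
    "\<forall>Y\<in>mfree \<phi>. (\<lambda>_. 0) \<notin> W Y \<and> msem mumble_next P W' (\<rho> Y) = shift_pos S g P -` W Y"
  shows "(\<lambda>_. 0) \<in> msem mumble_next P W' (init_tr S g \<rho> \<phi>) \<longleftrightarrow>
    (\<lambda>_. 0) \<in> msem (\<lambda>_. stutter_next g) P W \<phi>"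
  using assms(3-)
proof (induction \<phi> arbitrary: \<rho> W)
  case (MOr a b)
  have "(\<lambda>_. 0) \<in> msem mumble_next P W' (init_tr S g \<rho> a) \<longleftrightarrow> (\<lambda>_. 0) \<in> msem (\<lambda>_. stutter_next g) P W a"
    "(\<lambda>_. 0) \<in> msem mumble_next P W' (init_tr S g \<rho> b) \<longleftrightarrow> (\<lambda>_. 0) \<in> msem (\<lambda>_. stutter_next g) P W b"
    using MOr.prems by (intro MOr.IH; auto)+
  then show ?case by simp
next
  case (MNot a)
  have "(\<lambda>_. 0) \<in> msem mumble_next P W' (init_tr S g \<rho> a) \<longleftrightarrow> (\<lambda>_. 0) \<in> msem (\<lambda>_. stutter_next g) P W a"
    using MNot.prems by (intro MNot.IH) auto
  then show ?case by simp
next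
  case (MNext D a)
  have "msem mumble_next P W' (shift_tr S g \<rho> a) = shift_pos S g P -` msem (\<lambda>_. stutter_next g) P W a"
    using MNext.prems by (intro msem_shift_tr[OF assms(1)]) auto
  then show ?case using assms(2) by simp
next
  case (MMu X a)
  let ?t = "shift_pos S g P" and ?\<rho> = "\<rho>(X := shift_tr S g \<rho> (MMu X a))"
  define F where "F J = msem (\<lambda>_. stutter_next g) P (W(X := J)) a" for J
  have "mono F" unfolding F_def using MMu.prems(2) by (simp add: msem_mono)
  have "msem mumble_next P W' (shift_tr S g \<rho> (MMu X a)) = ?t -` msem (\<lambda>_. stutter_next g) P W (MMu X a)"
    using MMu.prems by (intro msem_shift_tr[OF assms(1)]) auto
  also have "\<dots> = ?t -` (lfp F - {\<lambda>_. 0})"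
    using shift_pos_ne_start unfolding msem_MMu_lfp F_def[symmetric] by blast
  finally have rec: "msem mumble_next P W' (?\<rho> X) = ?t -` (lfp F - {\<lambda>_. 0})"
    by (simp only: fun_upd_same)
  have closed: "mfree (shift_tr S g \<rho> (MMu X a)) = {}"
    using shift_tr_mfree[of S g \<rho> "MMu X a"] MMu.prems(3) by auto
  have F_apply: "F J = msem (\<lambda>_. stutter_next g) P (W(X := J)) a" for J by (simp add: F_def)
  have "\<forall>Y. mfree (?\<rho> Y) = {}" using MMu.prems(3) closed by simp
  moreover have "\<forall>Y\<in>mfree a. (\<lambda>_. 0) \<notin> (W(X := lfp F - {\<lambda>_. 0})) Y \<and>
      msem mumble_next P W' (?\<rho> Y) = ?t -` (W(X := lfp F - {\<lambda>_. 0})) Y"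
    using MMu.prems(4) rec by auto
  ultimately have "(\<lambda>_. 0) \<in> msem mumble_next P W' (init_tr S g ?\<rho> a) \<longleftrightarrow> (\<lambda>_. 0) \<in> F (lfp F - {\<lambda>_. 0})"
    unfolding F_apply using MMu.prems(1,2) by (intro MMu.IH) simp_all
  also have "\<dots> \<longleftrightarrow> (\<lambda>_. 0) \<in> lfp F" using mem_lfp_iff_mem_minus[OF \<open>mono F\<close>] by simp
  finally show ?case unfolding init_tr.simps(6) msem_MMu_lfp F_def[symmetric] .
qed simp_all

lemma msem_split_tr:
  "(\<lambda>_. 0) \<in> msem mumble_next P W' (split_tr g \<phi> qs S) \<longleftrightarrow>
   (\<lambda>_. 0) \<in> msem mumble_next P W'
     (init_tr (S \<union> {p\<in>set qs. 0 \<in> tsem0 (P p) (TStutSuc (g p))}) g (\<lambda>_. MFalse) \<phi>)"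
proof (induction qs arbitrary: S)
  case (Cons p ps)
  let ?stays = "\<lambda>q. 0 \<in> tsem0 (P q) (TStutSuc (g q))"
  have "S \<union> {q\<in>set (p # ps). ?stays q} = (if ?stays p then insert p S else S) \<union> {q\<in>set ps. ?stays q}"
    by auto
  then show ?case using Cons.IH by simp
qed simp

definition wf_mum_body ::
  "('ap tform \<Rightarrow> bool) \<Rightarrow> nat set \<Rightarrow> (nat \<Rightarrow> 'ap tform) \<Rightarrow> ('ap, nat \<Rightarrow> 'ap tform) mform \<Rightarrow> bool"
where
  "wf_mum_body B Q \<Delta> \<psi> \<longleftrightarrow> mwf \<psi> \<and> (\<forall>d\<in>mtests \<psi>. B d) \<and> mnexts \<psi> \<subseteq> {\<Delta>} \<and> mtvars \<psi> \<subseteq> Q"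

lemma wf_mum_body_shift_tr:
  assumes "\<And>d p. B d \<Longrightarrow> B (TNext SG d) \<and> B (TNext SG (TStutNext (g p) d))"
  shows "\<forall>Y. mfree (\<sigma> Y) \<subseteq> {Y} \<and> wf_mum_body B Q (\<lambda>p. TChange (g p)) (\<sigma> Y) \<Longrightarrow>
    mwf \<phi> \<Longrightarrow> \<forall>d\<in>mtests \<phi>. B d \<Longrightarrow> mtvars \<phi> \<subseteq> Q \<Longrightarrow>
    wf_mum_body B Q (\<lambda>p. TChange (g p)) (shift_tr S g \<sigma> \<phi>)"
proof (induction \<phi> arbitrary: \<sigma>)
  case (MMu X a)
  let ?\<sigma> = "\<sigma>(X := MVar X)"
  have \<sigma>: "\<forall>Y. mfree (?\<sigma> Y) \<subseteq> {Y} \<and> wf_mum_body B Q (\<lambda>p. TChange (g p)) (?\<sigma> Y)"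
    using MMu.prems(1) by (simp add: wf_mum_body_def)
  have "wf_mum_body B Q (\<lambda>p. TChange (g p)) (shift_tr S g ?\<sigma> a)"
    using MMu.prems(2-) by (intro MMu.IH[OF \<sigma>]) auto
  moreover have "mpos X True (shift_tr S g ?\<sigma> a)"
    using \<sigma> MMu.prems(2) by (intro shift_tr_mpos) auto
  ultimately show ?case by (simp add: wf_mum_body_def)
next
  case (MTest d p)
  then show ?case using assms by (simp add: wf_mum_body_def)
next
  case (MOr a b)
  then have "wf_mum_body B Q (\<lambda>p. TChange (g p)) (shift_tr S g \<sigma> a)"
    "wf_mum_body B Q (\<lambda>p. TChange (g p)) (shift_tr S g \<sigma> b)" by simp_all
  then show ?case by (auto simp: wf_mum_body_def)
next
  case (MNot a)
  then have "wf_mum_body B Q (\<lambda>p. TChange (g p)) (shift_tr S g \<sigma> a)" by simp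
  then show ?case by (simp add: wf_mum_body_def)
next
  case (MNext D a)
  then have "wf_mum_body B Q (\<lambda>p. TChange (g p)) (shift_tr S g \<sigma> a)" by simp
  then show ?case by (simp add: wf_mum_body_def)
qed simp

lemma wf_mum_body_init_tr:
  assumes "\<And>d p. B d \<Longrightarrow> B (TNext SG d) \<and> B (TNext SG (TStutNext (g p) d))"
  shows "\<forall>Y. mfree (\<rho> Y) = {} \<and> wf_mum_body B Q (\<lambda>p. TChange (g p)) (\<rho> Y) \<Longrightarrow>
    mwf \<phi> \<Longrightarrow> \<forall>d\<in>mtests \<phi>. B d \<Longrightarrow> mtvars \<phi> \<subseteq> Q \<Longrightarrow>
    mfree (init_tr S g \<rho> \<phi>) = {} \<and> wf_mum_body B Q (\<lambda>p. TChange (g p)) (init_tr S g \<rho> \<phi>)"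
proof (induction \<phi> arbitrary: \<rho>)
  case (MNext D a)
  have "mfree (shift_tr S g \<rho> a) = {}" using shift_tr_mfree[of S g \<rho> a] MNext.prems(1) by auto
  moreover have "wf_mum_body B Q (\<lambda>p. TChange (g p)) (shift_tr S g \<rho> a)"
    using MNext.prems by (intro wf_mum_body_shift_tr[OF assms]) auto
  ultimately show ?case by simp
next
  case (MMu X a)
  have "mfree (shift_tr S g \<rho> (MMu X a)) = {}"
    using shift_tr_mfree[of S g \<rho> "MMu X a"] MMu.prems(1) by auto
  moreover have "wf_mum_body B Q (\<lambda>p. TChange (g p)) (shift_tr S g \<rho> (MMu X a))"
    using MMu.prems by (intro wf_mum_body_shift_tr[OF assms]) auto
  ultimately show ?case using MMu by (simp del: shift_tr.simps)
next
  case (MOr a b)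
  then have "mfree (init_tr S g \<rho> a) = {} \<and> wf_mum_body B Q (\<lambda>p. TChange (g p)) (init_tr S g \<rho> a)"
    "mfree (init_tr S g \<rho> b) = {} \<and> wf_mum_body B Q (\<lambda>p. TChange (g p)) (init_tr S g \<rho> b)" by simp_all
  then show ?case by (auto simp: wf_mum_body_def)
next
  case (MNot a)
  then have "mfree (init_tr S g \<rho> a) = {} \<and> wf_mum_body B Q (\<lambda>p. TChange (g p)) (init_tr S g \<rho> a)"
    by simp
  then show ?case by (simp add: wf_mum_body_def)
qed (simp_all add: wf_mum_body_def)

lemma wf_mum_body_split_tr:
  assumes "\<And>d p. B d \<Longrightarrow> B (TNext SG d) \<and> B (TNext SG (TStutNext (g p) d))" "\<And>p. B (TStutSuc (g p))"
    "mfree \<phi> = {}" "mwf \<phi>" "\<forall>d\<in>mtests \<phi>. B d" "mtvars \<phi> \<subseteq> Q"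
  shows "set qs \<subseteq> Q \<Longrightarrow>
    mfree (split_tr g \<phi> qs S) = {} \<and> wf_mum_body B Q (\<lambda>p. TChange (g p)) (split_tr g \<phi> qs S)"
proof (induction qs arbitrary: S)
  case Nil
  have "\<forall>Y. mfree ((\<lambda>_. MFalse) Y) = {} \<and> wf_mum_body B Q (\<lambda>p. TChange (g p)) ((\<lambda>_. MFalse) Y)"
    by (simp add: wf_mum_body_def)
  from wf_mum_body_init_tr[OF assms(1) this assms(4-6)] show ?case by simp
next
  case (Cons p ps)
  then show ?case using assms(2) by (auto simp: wf_mum_body_def)
qed

text \<open>Outside the quantified trace variables the annotation is chosen empty, so that the first
  stuttering step there leads to position 1.\<close>

definition the_ann :: "('ap, nat \<Rightarrow> 'ap tform set) hform \<Rightarrow> nat \<Rightarrow> 'ap tform set" where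
  "the_ann f p =
     (if p \<in> hqvars f \<and> mnexts (hbody f) \<noteq> {} then (SOME G. G \<in> mnexts (hbody f)) p else {})"

lemma the_ann_subset:
  assumes "closed_stut f"
  shows "finite (the_ann f p) \<and> the_ann f p \<subseteq> ann_stut f"
proof (cases "p \<in> hqvars f \<and> mnexts (hbody f) \<noteq> {}")
  case True
  define G where "G = (SOME G. G \<in> mnexts (hbody f))"
  have "G \<in> mnexts (hbody f)" using True by (simp add: G_def some_in_eq)
  moreover have "the_ann f p = G p" using True by (simp add: the_ann_def G_def)
  moreover have "finite (G p)"
    using assms True \<open>G \<in> mnexts (hbody f)\<close> by (simp add: closed_stut_def)
  moreover have "G p \<subseteq> ann_stut f" using True \<open>G \<in> mnexts (hbody f)\<close> unfolding ann_stut_def by blast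
  ultimately show ?thesis by simp
next
  case False
  then have "the_ann f p = {}" unfolding the_ann_def by argo
  then show ?thesis by simp
qed

lemma the_ann_unique:
  assumes "unique_ann f" "G \<in> mnexts (hbody f)" "p \<in> hqvars f"
  shows "G p = the_ann f p"
proof -
  have "(SOME G. G \<in> mnexts (hbody f)) \<in> mnexts (hbody f)" using assms(2) by (auto simp: some_in_eq)
  with assms show ?thesis by (auto simp: the_ann_def unique_ann_def)
qed

fun hmap :: "(('ap, 'd1) mform \<Rightarrow> ('ap, 'd2) mform) \<Rightarrow> ('ap, 'd1) hform \<Rightarrow> ('ap, 'd2) hform" where
  "hmap h (HEx p f) = HEx p (hmap h f)"
| "hmap h (HAll p f) = HAll p (hmap h f)"
| "hmap h (HBody a) = HBody (h a)"

lemma hbody_hmap [simp]: "hbody (hmap h f) = h (hbody f)"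
  by (induction f) auto

lemma hqvars_hmap [simp]: "hqvars (hmap h f) = hqvars f"
  by (induction f) auto

lemma finite_hqvars: "finite (hqvars f)"
  by (induction f) auto

lemma hsat_hmap:
  assumes "\<And>P. (\<lambda>_. 0) \<in> msem nx2 P (\<lambda>_. {}) (h (hbody f)) \<longleftrightarrow> (\<lambda>_. 0) \<in> msem nx1 P (\<lambda>_. {}) (hbody f)"
  shows "hsat nx2 T P (hmap h f) = hsat nx1 T P f"
  using assms by (induction f arbitrary: P) auto

definition mumble_transl :: "('ap, nat \<Rightarrow> 'ap tform set) hform \<Rightarrow> ('ap, nat \<Rightarrow> 'ap tform) hform" where
  "mumble_transl f =
     hmap (\<lambda>\<psi>. split_tr (the_ann f) \<psi> (sorted_list_of_set (hqvars f)) (- hqvars f)) f"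

lemma msem_mumble_transl:
  assumes "closed_stut f" "unique_ann f"
  shows "(\<lambda>_. 0) \<in> msem mumble_next P (\<lambda>_. {}) (hbody (mumble_transl f)) \<longleftrightarrow>
    (\<lambda>_. 0) \<in> msem stutter_next P (\<lambda>_. {}) (hbody f)"
proof -
  define Q where "Q = hqvars f"
  define g where "g = the_ann f"
  define S where "S = - Q \<union> {p \<in> Q. 0 \<in> tsem0 (P p) (TStutSuc (g p))}"
  have tclosed: "\<forall>d\<in>base_stut f. tclosed_wf d" using assms(1) by (simp add: closed_stut_def)
  have "wf_ann g"
    using the_ann_subset[OF assms(1)] tclosed by (auto simp: wf_ann_def g_def base_stut_def)
  then have fin: "finite (g p)" "\<forall>e\<in>g p. tclosed_wf e" for p by (auto simp: wf_ann_def)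
  have "set (sorted_list_of_set Q) = Q" by (simp add: Q_def finite_hqvars)
  then have "(\<lambda>_. 0) \<in> msem mumble_next P (\<lambda>_. {}) (hbody (mumble_transl f)) \<longleftrightarrow>
      (\<lambda>_. 0) \<in> msem mumble_next P (\<lambda>_. {}) (init_tr S g (\<lambda>_. MFalse) (hbody f))"
    by (simp add: mumble_transl_def msem_split_tr Q_def g_def S_def
        Un_ac(3) Collect_conj_eq Int_commute)
  also have "\<dots> \<longleftrightarrow> (\<lambda>_. 0) \<in> msem (\<lambda>_. stutter_next g) P (\<lambda>_. {}) (hbody f)"
  proof (rule msem_init_tr[OF \<open>wf_ann g\<close>])
    show "shift_pos S g P (\<lambda>_. 0) = stutter_next g P (\<lambda>_. 0)"
    proof (rule shift_pos_start)
      fix p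
      show "p \<in> S \<longleftrightarrow> succ_gamma (P p) 0 (g p) = 1"
      proof (cases "p \<in> Q")
        case False
        then have "g p = {}" by (simp add: g_def the_ann_def Q_def)
        with False show ?thesis by (simp add: S_def succ_gamma_no_change_point change_points_def)
      qed (simp add: S_def tsem0_TStutSuc fin)
    qed
    show "\<forall>d\<in>mtests (hbody f). tclosed_wf d" using tclosed by (simp add: base_stut_def)
  qed (use assms(1) in \<open>simp_all add: closed_stut_def\<close>)
  also have "\<dots> \<longleftrightarrow> (\<lambda>_. 0) \<in> msem stutter_next P (\<lambda>_. {}) (hbody f)"
  proof -
    have "\<forall>G\<in>mnexts (hbody f). \<forall>p\<in>Q. G p = g p"
      using the_ann_unique[OF assms(2)] by (simp add: Q_def g_def)
    moreover have "\<forall>X. determined_by Q ((\<lambda>_. {}) X)" by (simp add: determined_by_def)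
    ultimately show ?thesis
      using msem_stutter_next_uniform[of "hbody f" Q] assms(1) by (simp add: closed_stut_def Q_def)
  qed
  finally show ?thesis .
qed

lemma hmodels_mumble_transl:
  assumes "closed_stut f" "unique_ann f"
  shows "hmodels mumble_next T (mumble_transl f) = hmodels stutter_next T f"
  unfolding hmodels_def mumble_transl_def
  by (rule hsat_hmap) (use msem_mumble_transl[OF assms] in \<open>simp add: mumble_transl_def\<close>)

lemma frag_mum_mumble_transl:
  assumes "ltl_closed B" "frag_stut B f"
  shows "frag_mum B (mumble_transl f)"
proof -
  define B' where "B' d \<longleftrightarrow> B d \<and> tclosed_wf d" for d
  define g where "g = the_ann f"
  define \<psi> where "\<psi> = hbody (mumble_transl f)"
  have B': "ltl_closed B'"
    unfolding B'_def using ltl_closed_conj[OF assms(1) ltl_closed_tclosed_wf] .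
  have closed: "closed_stut f" and base: "\<forall>d\<in>base_stut f. B' d"
    using assms(2) by (auto simp: frag_stut_def closed_stut_def B'_def)
  have g: "finite (g p)" "\<forall>e\<in>g p. B' e" for p
    using the_ann_subset[OF closed, of p] base by (auto simp: base_stut_def g_def)
  have "\<forall>d\<in>mtests (hbody f). B' d" using base by (simp add: base_stut_def)
  moreover have "B' d \<Longrightarrow> B' (TNext SG d) \<and> B' (TNext SG (TStutNext (g p) d))" for d p
    using ltl_closedD(4)[OF B'] ltl_closed_TStut(1)[OF B' g] by simp
  moreover have "B' (TStutSuc (g p))" for p using ltl_closed_TStut(2)[OF B' g] .
  ultimately have "mfree \<psi> = {} \<and> wf_mum_body B' (hqvars f) (\<lambda>p. TChange (g p)) \<psi>"
    unfolding \<psi>_def mumble_transl_def hbody_hmap g_def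
    using closed by (intro wf_mum_body_split_tr) (simp_all add: closed_stut_def finite_hqvars)
  then have "mfree \<psi> = {}" and ok: "wf_mum_body B' (hqvars f) (\<lambda>p. TChange (g p)) \<psi>" by simp_all
  then have nexts: "D = (\<lambda>p. TChange (g p))" if "D \<in> mnexts \<psi>" for D
    using that by (auto simp: wf_mum_body_def)
  have "B' (TChange (g p))" for p using ltl_closed_TChange[OF B' g] .
  moreover have "hqvars (mumble_transl f) = hqvars f" by (simp add: mumble_transl_def)
  ultimately show ?thesis
    using \<open>mfree \<psi> = {}\<close> ok
    unfolding frag_mum_def closed_mum_def unique_ann_def base_mum_def ann_mum_def \<psi>_def[symmetric]
    by (auto simp: wf_mum_body_def B'_def dest: nexts)
qed

lemma at_least_as_expressive_mumble_stutter:
  assumes "ltl_closed B"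
  shows "at_least_as_expressive
    (frag_mum B) (hmodels mumble_next) (frag_stut B) (hmodels stutter_next)"
  unfolding at_least_as_expressive_def
proof (intro allI impI)
  fix f :: "('a, nat \<Rightarrow> 'a tform set) hform"
  assume "frag_stut B f"
  then show "\<exists>f'. frag_mum B f' \<and> (\<forall>T. hmodels stutter_next T f = hmodels mumble_next T f')"
    using frag_mum_mumble_transl[OF assms] hmodels_mumble_transl by (auto simp: frag_stut_def)
qed

theorem lemma6p2:
  shows "at_least_as_expressive
           (frag_mum is_ltl) (hmodels mumble_next)
           (frag_stut is_ltl) (hmodels stutter_next :: ('ap::finite) trace set \<Rightarrow> _ \<Rightarrow> bool)
       \<and> at_least_as_expressive
           (frag_mum (\<lambda>_. True)) (hmodels mumble_next)
           (frag_stut (\<lambda>_. True)) (hmodels stutter_next :: ('ap::finite) trace set \<Rightarrow> _ \<Rightarrow> bool)"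
proof
  show "at_least_as_expressive (frag_mum is_ltl) (hmodels mumble_next)
      (frag_stut is_ltl) (hmodels stutter_next :: 'ap trace set \<Rightarrow> _ \<Rightarrow> bool)"
    using ltl_closed_is_ltl by (rule at_least_as_expressive_mumble_stutter)
  show "at_least_as_expressive (frag_mum (\<lambda>_. True)) (hmodels mumble_next)
      (frag_stut (\<lambda>_. True)) (hmodels stutter_next :: 'ap trace set \<Rightarrow> _ \<Rightarrow> bool)"
    by (rule at_least_as_expressive_mumble_stutter) (simp add: ltl_closed_def)
qed

end
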